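(* Let $(X,T)$ be a minimal dendric subshift over a finite alphabet $\mathcal{A}$. Then $(X,T)$ is balanced on letters if and only if it is balanced on factors. In particular, if $(X,T)$ is balanced (on letters, equivalently on factors), then for every factor $v\in\mathcal{L}(X)$ the frequency $\mu_v$ of $v$ is an additive topological eigenvalue of $(X,T)$, and every cylinder $[v]$ is a bounded remainder set.
   Context: $\mathcal{A}$ is a finite alphabet, $T$ is the shift on $\mathcal{A}^{\mathbb{Z}}$, $T((u_n)_n)=(u_{n+1})_n$. A subshift $(X,T)$ is a closed shift-invariant subset $X\subseteq\mathcal{A}^{\mathbb Z}$; it is minimal if it has no nonempty proper closed shift-invariant subset. $\mathcal{L}(X)$ is the set of finite words occurring as factors (blocks of consecutive letters) of elements of $X$, and $\mathcal{L}_n(X)$ those of length $n$. For $w\in\mathcal{L}(X)$ let $L(w)=\{a\in\mathcal{A}: aw\in\mathcal{L}(X)\}$, $R(w)=\{b\in\mathcal{A}: wb\in\mathcal{L}(X)\}$, $E(w)=\{(a,b): awb\in\mathcal{L}(X)\}$; the extension graph $\mathcal{E}(w)$ is the bipartite undirected graph whose vertex set is the disjoint union of $L(w)$ and $R(w)$ and whose edges are the pairs in $E(w)$. A minimal subshift is dendric if $\mathcal{E}(w)$ is a tree for every $w\in\mathcal{L}(X)$ (including the empty word). For finite words $w,v$, $|w|_v$ is the number of occurrences of $v$ as a factor of $w$ and $|w|$ is the length of $w$. $(X,T)$ is balanced on $v\in\mathcal{L}(X)$ if there is a constant $C_v$ such that $||w|_v-|w'|_v|\le C_v$ for all $w,w'\in\mathcal{L}(X)$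 with $|w|=|w'|$; it is balanced on letters if balanced on every letter, and balanced on factors if balanced on every $v\in\mathcal{L}(X)$. The cylinder of $v=v_0\cdots v_{n}$ is $[v]=\{x\in X: x_0\cdots x_n=v\}$. The frequency $\mu_v$ of $v$ is the (uniform) limit of $|w|_v/|w|$ over factors $w$ as $|w|\to\infty$ (equal to $\mu([v])$ for the invariant measure). $\theta\in\mathbb{R}$ is an additive topological eigenvalue if there is a nonzero continuous $f:X\to\mathbb{C}$ with $f(Tx)=e^{2i\pi\theta}f(x)$ for all $x\in X$. The cylinder $[v]$ is a bounded remainder set if $\sup_{x\in X,\,n\ge 0}\big|\#\{0\le i<n: T^ix\in[v]\}-n\mu_v\big|<\infty$. *)

theory Defs
  imports "HOL-Analysis.Analysis"
begin

text \<open>Configurations are bi-infinite sequences \<open>int \<Rightarrow> 'a\<close> over a finite alphabet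
  (the finite type \<open>'a\<close>).\<close>

definition shift :: "(int \<Rightarrow> 'a) \<Rightarrow> (int \<Rightarrow> 'a)" where
  "shift x = (\<lambda>n. x (n + 1))"

definition full_shift_top :: "(int \<Rightarrow> 'a) topology" where
  "full_shift_top = product_topology (\<lambda>_::int. discrete_topology (UNIV :: 'a set)) UNIV"

definition subshift :: "(int \<Rightarrow> 'a) set \<Rightarrow> bool" where
  "subshift X \<longleftrightarrow> closedin full_shift_top X \<and> shift ` X = X"

definition minimal_subshift :: "(int \<Rightarrow> 'a) set \<Rightarrow> bool" where
  "minimal_subshift X \<longleftrightarrow> subshift X \<and> X \<noteq> {} \<and>
     (\<forall>Y. subshift Y \<and> Y \<subseteq> X \<and> Y \<noteq> {} \<longrightarrow> Y = X)"

definition occurs_at :: "'a list \<Rightarrow> (int \<Rightarrow> 'a) \<Rightarrow> int \<Rightarrow> bool" where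
  "occurs_at w x i \<longleftrightarrow> (\<forall>j < length w. x (i + int j) = w ! j)"

definition lang :: "(int \<Rightarrow> 'a) set \<Rightarrow> 'a list set" where
  "lang X = {w. \<exists>x\<in>X. \<exists>i. occurs_at w x i}"

definition left_ext :: "(int \<Rightarrow> 'a) set \<Rightarrow> 'a list \<Rightarrow> 'a set" where
  "left_ext X w = {a. a # w \<in> lang X}"

definition right_ext :: "(int \<Rightarrow> 'a) set \<Rightarrow> 'a list \<Rightarrow> 'a set" where
  "right_ext X w = {b. w @ [b] \<in> lang X}"

definition bi_ext :: "(int \<Rightarrow> 'a) set \<Rightarrow> 'a list \<Rightarrow> ('a \<times> 'a) set" where
  "bi_ext X w = {(a, b). a # w @ [b] \<in> lang X}"

text \<open>Extension graph: bipartite, vertices \<open>Inl ` L(w) \<union> Inr ` R(w)\<close>, edges from \<open>E(w)\<close>.\<close>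
definition ext_vertices :: "(int \<Rightarrow> 'a) set \<Rightarrow> 'a list \<Rightarrow> ('a + 'a) set" where
  "ext_vertices X w = Inl ` left_ext X w \<union> Inr ` right_ext X w"

fun ext_adj :: "(int \<Rightarrow> 'a) set \<Rightarrow> 'a list \<Rightarrow> ('a + 'a) \<Rightarrow> ('a + 'a) \<Rightarrow> bool" where
  "ext_adj X w (Inl a) (Inr b) = ((a, b) \<in> bi_ext X w)"
| "ext_adj X w (Inr b) (Inl a) = ((a, b) \<in> bi_ext X w)"
| "ext_adj X w _ _ = False"

text \<open>Undirected (simple) graphs given by a vertex set and a symmetric adjacency relation.\<close>
definition is_walk :: "'v set \<Rightarrow> ('v \<Rightarrow> 'v \<Rightarrow> bool) \<Rightarrow> 'v list \<Rightarrow> bool" where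
  "is_walk V adj p \<longleftrightarrow> p \<noteq> [] \<and> set p \<subseteq> V \<and> (\<forall>i. i + 1 < length p \<longrightarrow> adj (p ! i) (p ! (i + 1)))"

definition graph_connected :: "'v set \<Rightarrow> ('v \<Rightarrow> 'v \<Rightarrow> bool) \<Rightarrow> bool" where
  "graph_connected V adj \<longleftrightarrow>
     (\<forall>u\<in>V. \<forall>v\<in>V. \<exists>p. is_walk V adj p \<and> hd p = u \<and> last p = v)"

definition has_cycle :: "'v set \<Rightarrow> ('v \<Rightarrow> 'v \<Rightarrow> bool) \<Rightarrow> bool" where
  "has_cycle V adj \<longleftrightarrow>
     (\<exists>c. length c \<ge> 3 \<and> distinct c \<and> is_walk V adj c \<and> adj (last c) (hd c))"

definition is_tree :: "'v set \<Rightarrow> ('v \<Rightarrow> 'v \<Rightarrow> bool) \<Rightarrow> bool" where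
  "is_tree V adj \<longleftrightarrow> V \<noteq> {} \<and> graph_connected V adj \<and> \<not> has_cycle V adj"

definition dendric :: "(int \<Rightarrow> 'a) set \<Rightarrow> bool" where
  "dendric X \<longleftrightarrow> minimal_subshift X \<and>
     (\<forall>w\<in>lang X. is_tree (ext_vertices X w) (ext_adj X w))"

definition occ_count :: "'a list \<Rightarrow> 'a list \<Rightarrow> nat" where
  "occ_count w v = card {i. i + length v \<le> length w \<and> take (length v) (drop i w) = v}"

definition balanced_on :: "(int \<Rightarrow> 'a) set \<Rightarrow> 'a list \<Rightarrow> bool" where
  "balanced_on X v \<longleftrightarrow> (\<exists>C::nat. \<forall>w\<in>lang X. \<forall>w'\<in>lang X. length w = length w' \<longrightarrow>
      \<bar>int (occ_count w v) - int (occ_count w' v)\<bar> \<le> int C)"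

definition balanced_on_letters :: "(int \<Rightarrow> 'a) set \<Rightarrow> bool" where
  "balanced_on_letters X \<longleftrightarrow> (\<forall>a. balanced_on X [a])"

definition balanced_on_factors :: "(int \<Rightarrow> 'a) set \<Rightarrow> bool" where
  "balanced_on_factors X \<longleftrightarrow> (\<forall>v\<in>lang X. balanced_on X v)"

definition is_frequency :: "(int \<Rightarrow> 'a) set \<Rightarrow> 'a list \<Rightarrow> real \<Rightarrow> bool" where
  "is_frequency X v f \<longleftrightarrow> (\<forall>\<epsilon>>0. \<exists>N. \<forall>w\<in>lang X. length w \<ge> N \<longrightarrow>
      \<bar>real (occ_count w v) / real (length w) - f\<bar> < \<epsilon>)"

definition additive_top_eigenvalue :: "(int \<Rightarrow> 'a) set \<Rightarrow> real \<Rightarrow> bool" where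
  "additive_top_eigenvalue X \<theta> \<longleftrightarrow> (\<exists>g :: (int \<Rightarrow> 'a) \<Rightarrow> complex.
      continuous_map (subtopology full_shift_top X) euclidean g \<and>
      (\<exists>x\<in>X. g x \<noteq> 0) \<and>
      (\<forall>x\<in>X. g (shift x) = exp (2 * pi * \<i> * complex_of_real \<theta>) * g x))"

definition cylinder :: "(int \<Rightarrow> 'a) set \<Rightarrow> 'a list \<Rightarrow> (int \<Rightarrow> 'a) set" where
  "cylinder X v = {x\<in>X. occurs_at v x 0}"

definition bounded_remainder_set :: "(int \<Rightarrow> 'a) set \<Rightarrow> 'a list \<Rightarrow> real \<Rightarrow> bool" where
  "bounded_remainder_set X v \<mu> \<longleftrightarrow> (\<exists>B::real. \<forall>x\<in>X. \<forall>n::nat.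
      \<bar>real (card {i. i < n \<and> (shift ^^ i) x \<in> cylinder X v}) - real n * \<mu>\<bar> \<le> B)"

end

theory Submission
  imports Defs "HOL-Library.Function_Algebras"
begin

text \<open>
  Summing the number of occurrences of \<open>a w b\<close> over all letters \<open>b\<close> (resp. \<open>a\<close>) gives the
  number of occurrences of \<open>a w\<close> (resp. \<open>w b\<close>) up to one. So if the edge \<open>(a, b)\<close> of the
  extension graph of \<open>w\<close> carries the counting function of \<open>a w b\<close>, every vertex sum is, up to a
  bounded error, the counting function of a shorter factor. In a tree, peeling off leaves writes
  every edge weight as an integer combination of vertex sums; by induction on the length, the
  counting function of every factor of a dendric subshift is a fixed integer combination of the
  letter counts up to a bounded error, and balance on letters passes to all factors.

  Balance on \<open>v\<close> makes the counts of \<open>v\<close> in the prefixes of an orbit quasi-additive, so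
  \<open>|w|_v = |w| \<mu> + O(1)\<close> uniformly in \<open>w\<close>. This yields the frequency \<open>\<mu>\<close>, the bounded
  remainder property, and bounded two-sided Birkhoff sums of \<open>1_[v] - \<mu>\<close>, which by the
  Gottschalk--Hedlund argument form a continuous coboundary; exponentiating the transfer function
  gives an eigenfunction for \<open>\<mu>\<close>.
\<close>

section \<open>Occurrences of factors\<close>

definition occ_positions :: "'a list \<Rightarrow> 'a list \<Rightarrow> nat set" where
  "occ_positions w v = {i. i + length v \<le> length w \<and> take (length v) (drop i w) = v}"

lemma occ_count_eq_card: "occ_count w v = card (occ_positions w v)"
  by (simp add: occ_count_def occ_positions_def)

lemma finite_occ_positions [simp]: "finite (occ_positions w v)"
  by (rule finite_subset[of _ "{..length w}"]) (auto simp: occ_positions_def)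

lemma occ_count_le_length: "occ_count w v \<le> length w + 1"
proof -
  have "card (occ_positions w v) \<le> card {..length w}"
    by (rule card_mono) (auto simp: occ_positions_def)
  then show ?thesis by (simp add: occ_count_eq_card)
qed

lemma occ_count_append_ge: "occ_count p v + occ_count q v \<le> occ_count (p @ q) v + 1"
proof -
  let ?A = "occ_positions p v" and ?B = "(\<lambda>i. i + length p) ` occ_positions q v"
  have "card ?A + card ?B = card (?A \<union> ?B) + card (?A \<inter> ?B)"
    by (rule card_Un_Int) auto
  also have "card (?A \<union> ?B) \<le> card (occ_positions (p @ q) v)"
    by (rule card_mono[OF finite_occ_positions]) (auto simp: occ_positions_def)
  also have "card (?A \<inter> ?B) \<le> card {length p}"
    by (rule card_mono) (auto simp: occ_positions_def)
  also have "card ?B = card (occ_positions q v)"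
    by (rule card_image) (auto simp: inj_on_def)
  finally show ?thesis by (simp add: occ_count_eq_card)
qed

lemma occ_count_append_le: "occ_count (p @ q) v \<le> occ_count p v + occ_count q v + length v"
proof -
  let ?A = "occ_positions p v" and ?B = "(\<lambda>i. i + length p) ` occ_positions q v"
    and ?C = "{i. i < length p \<and> length p < i + length v}"
  have "occ_positions (p @ q) v \<subseteq> ?A \<union> ?B \<union> ?C"
  proof
    fix i assume i: "i \<in> occ_positions (p @ q) v"
    show "i \<in> ?A \<union> ?B \<union> ?C"
    proof (cases "length p \<le> i")
      case True
      then have "i - length p \<in> occ_positions q v" and "i = (i - length p) + length p"
        using i by (auto simp: occ_positions_def)
      then show ?thesis by blast
    qed (use i in \<open>auto simp: occ_positions_def\<close>)
  qed
  then have "card (occ_positions (p @ q) v) \<le> card (?A \<union> ?B \<union> ?C)"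
    by (intro card_mono) auto
  also have "\<dots> \<le> card ?A + card ?B + card ?C"
    by (meson card_Un_le add_le_mono le_trans order_refl)
  also have "card ?B = card (occ_positions q v)"
    by (rule card_image) (auto simp: inj_on_def)
  also have "card ?C \<le> card {length p - length v..<length p}"
    by (rule card_mono) auto
  finally show ?thesis by (simp add: occ_count_eq_card)
qed

lemma occ_positions_snoc:
  "occ_positions w (u @ [b]) =
     {i \<in> occ_positions w u. i + length u < length w \<and> w ! (i + length u) = b}"
proof -
  have "take (Suc (length u)) (drop i w) = u @ [b] \<longleftrightarrow>
        take (length u) (drop i w) = u \<and> w ! (i + length u) = b"
    if "i + length u < length w" for i
    using that by (simp add: take_Suc_conv_app_nth add.commute)
  then show ?thesis by (auto simp: occ_positions_def)
qed

lemma occ_positions_Cons: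
  "Suc ` occ_positions w (a # u) = {i \<in> occ_positions w u. 0 < i \<and> w ! (i - 1) = a}"
proof -
  have "take (Suc (length u)) (drop j w) = a # u \<longleftrightarrow>
        take (length u) (drop (Suc j) w) = u \<and> w ! j = a"
    if "Suc j + length u \<le> length w" for j
  proof -
    have "drop j w = w ! j # drop (Suc j) w"
      using that by (simp add: Cons_nth_drop_Suc)
    then show ?thesis by auto
  qed
  then have "occ_positions w (a # u)
      = (\<lambda>i. i - 1) ` {i \<in> occ_positions w u. 0 < i \<and> w ! (i - 1) = a}"
    by (force simp: occ_positions_def image_iff)
  then show ?thesis by (force simp: image_image)
qed

lemma card_partition_by_value:
  fixes g :: "'b \<Rightarrow> 'a::finite"
  assumes "finite A"
  shows "(\<Sum>b\<in>UNIV. card {i \<in> A. g i = b}) = card A"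
proof -
  have "card (\<Union>b. {i \<in> A. g i = b}) = (\<Sum>b\<in>UNIV. card {i \<in> A. g i = b})"
    by (rule card_UN_disjoint) (use assms in auto)
  moreover have "(\<Union>b. {i \<in> A. g i = b}) = A" by auto
  ultimately show ?thesis by simp
qed

lemma occ_count_right_extensions:
  fixes w u :: "'a::finite list"
  shows "\<bar>int (occ_count w u) - (\<Sum>b\<in>UNIV. int (occ_count w (u @ [b])))\<bar> \<le> 1"
proof -
  let ?A = "{i \<in> occ_positions w u. i + length u < length w}"
  have "finite ?A" by simp
  then have "(\<Sum>b\<in>UNIV. occ_count w (u @ [b])) = card ?A"
    unfolding occ_count_eq_card occ_positions_snoc
    using card_partition_by_value[of ?A "\<lambda>i. w ! (i + length u)"] by (simp add: conj_assoc)
  moreover have "card ?A \<le> card (occ_positions w u)"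
    by (rule card_mono) auto
  moreover have "card (occ_positions w u) \<le> card (insert (length w - length u) ?A)"
    by (rule card_mono) (simp, auto simp: occ_positions_def)
  moreover have "card (insert (length w - length u) ?A) \<le> card ?A + 1"
    by (simp add: card_insert_if)
  ultimately show ?thesis
    unfolding occ_count_eq_card of_nat_sum[symmetric] by linarith
qed

lemma occ_count_left_extensions:
  fixes w u :: "'a::finite list"
  shows "\<bar>int (occ_count w u) - (\<Sum>a\<in>UNIV. int (occ_count w (a # u)))\<bar> \<le> 1"
proof -
  let ?A = "{i \<in> occ_positions w u. 0 < i}"
  have "occ_count w (a # u) = card (Suc ` occ_positions w (a # u))" for a
    by (simp add: occ_count_eq_card card_image)
  also have "card (Suc ` occ_positions w (a # u)) = card {i \<in> ?A. w ! (i - 1) = a}" for a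
    by (simp add: occ_positions_Cons conj_assoc)
  finally have "(\<Sum>a\<in>UNIV. occ_count w (a # u)) = card ?A"
    using card_partition_by_value[of ?A "\<lambda>i. w ! (i - 1)"] by simp
  moreover have "card ?A \<le> card (occ_positions w u)"
    by (rule card_mono) auto
  moreover have "card (occ_positions w u) \<le> card (insert 0 ?A)"
    by (rule card_mono) auto
  moreover have "card (insert 0 ?A) \<le> card ?A + 1"
    by (simp add: card_insert_if)
  ultimately show ?thesis
    unfolding occ_count_eq_card of_nat_sum[symmetric] by linarith
qed

lemma lang_infix:
  assumes "p @ q @ r \<in> lang X"
  shows "q \<in> lang X"
proof -
  obtain x i where "x \<in> X" and occ: "occurs_at (p @ q @ r) x i"
    using assms by (auto simp: lang_def)
  have "x (i + int (length p) + int j) = q ! j" if "j < length q" for j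
    using occ[unfolded occurs_at_def, rule_format, of "length p + j"] that
    by (simp add: nth_append add.assoc)
  then have "occurs_at q x (i + int (length p))"
    by (simp add: occurs_at_def)
  with \<open>x \<in> X\<close> show ?thesis by (auto simp: lang_def)
qed

lemma lang_Cons_snoc_prefix: "a # u @ [b] \<in> lang X \<Longrightarrow> a # u \<in> lang X"
  using lang_infix[of "[]" "a # u" "[b]"] by simp

lemma lang_Cons_snoc_suffix: "a # u @ [b] \<in> lang X \<Longrightarrow> u @ [b] \<in> lang X"
  using lang_infix[of "[a]" "u @ [b]" "[]"] by simp

lemma occ_count_not_in_lang:
  assumes "w \<in> lang X" and "v \<notin> lang X"
  shows "occ_count w v = 0"
proof (rule ccontr)
  assume "occ_count w v \<noteq> 0"
  then obtain i where "take (length v) (drop i w) = v"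
    by (auto simp: occ_count_eq_card occ_positions_def card_eq_0_iff)
  then have "take i w @ v @ drop (length v) (drop i w) = w"
    by (metis append_take_drop_id)
  with assms show False
    using lang_infix[of "take i w" v] by metis
qed

definition word_at :: "(int \<Rightarrow> 'a) \<Rightarrow> int \<Rightarrow> nat \<Rightarrow> 'a list" where
  "word_at x a n = map (\<lambda>j. x (a + int j)) [0..<n]"

lemma length_word_at [simp]: "length (word_at x a n) = n"
  by (simp add: word_at_def)

lemma word_at_in_lang: "x \<in> X \<Longrightarrow> word_at x a n \<in> lang X"
  by (auto simp: lang_def occurs_at_def word_at_def)

lemma occ_positions_word_at:
  "occ_positions (word_at x a n) v = {i. i + length v \<le> n \<and> occurs_at v x (a + int i)}"
proof -
  have "take (length v) (drop i (word_at x a n)) = v \<longleftrightarrow> occurs_at v x (a + int i)"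
    if "i + length v \<le> n" for i
    using that by (auto simp: word_at_def occurs_at_def list_eq_iff_nth_eq add.assoc)
  then show ?thesis by (auto simp: occ_positions_def)
qed

section \<open>Edge weights on finite forests\<close>

lemma is_walk_mono: "is_walk V adj p \<Longrightarrow> (\<And>x y. adj x y \<Longrightarrow> adj' x y) \<Longrightarrow> is_walk V adj' p"
  by (auto simp: is_walk_def)

lemma has_cycle_mono:
  "has_cycle V adj \<Longrightarrow> (\<And>x y. adj x y \<Longrightarrow> adj' x y) \<Longrightarrow> has_cycle V adj'"
  unfolding has_cycle_def by (meson is_walk_mono)

lemma is_walk_snoc:
  assumes "is_walk V adj p" and "u \<in> V" and "adj (last p) u"
  shows "is_walk V adj (p @ [u])"
proof -
  have "adj ((p @ [u]) ! i) ((p @ [u]) ! (i + 1))" if "i + 1 < length (p @ [u])" for i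
  proof (cases "i + 1 < length p")
    case True
    with assms(1) show ?thesis by (auto simp: is_walk_def nth_append)
  next
    case False
    with that have "i = length p - 1" by simp
    with assms show ?thesis by (auto simp: is_walk_def nth_append last_conv_nth)
  qed
  with assms show ?thesis by (auto simp: is_walk_def)
qed

lemma acyclic_no_back_edge:
  assumes "\<not> has_cycle V adj" and "distinct p" and "is_walk V adj p" and "j + 2 < length p"
  shows "\<not> adj (last p) (p ! j)"
proof
  assume back_edge: "adj (last p) (p ! j)"
  have "has_cycle V adj"
    unfolding has_cycle_def
  proof (intro exI conjI)
    show "3 \<le> length (drop j p)" "distinct (drop j p)"
      using assms(2,4) by auto
    show "is_walk V adj (drop j p)"
      using assms(3,4) by (auto simp: is_walk_def add.assoc dest: in_set_dropD)
    show "adj (last (drop j p)) (hd (drop j p))"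
      using back_edge assms(4) by (simp add: hd_drop_conv_nth)
  qed
  with assms(1) show False ..
qed

lemma longest_distinct_walk:
  assumes "finite V" and "distinct p0" and "is_walk V adj p0"
  obtains p where "distinct p" "is_walk V adj p"
    "\<And>q. distinct q \<Longrightarrow> is_walk V adj q \<Longrightarrow> length q \<le> length p"
proof -
  have "length p < card V + 1" if "distinct p \<and> is_walk V adj p" for p
    using that card_mono[OF assms(1), of "set p"] by (auto simp: is_walk_def distinct_card)
  then obtain p where p: "distinct p \<and> is_walk V adj p"
    and longest: "\<And>q. distinct q \<and> is_walk V adj q \<Longrightarrow> length q \<le> length p"
    using ex_has_greatest_nat[of "\<lambda>p. distinct p \<and> is_walk V adj p" p0 length "card V + 1"]
      assms(2,3) by auto
  show ?thesis
    by (rule that) (use p longest in auto)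
qed

text \<open>The last vertex of a longest path is a leaf.\<close>

lemma acyclic_graph_has_leaf:
  assumes fin: "finite V" and sym: "\<And>u v. adj u v \<Longrightarrow> adj v u" and irrefl: "\<And>u. \<not> adj u u"
    and acyclic: "\<not> has_cycle V adj" and edge: "u0 \<in> V" "v0 \<in> V" "adj u0 v0"
  obtains v u where "v \<in> V" "u \<in> V" "adj v u" "\<And>u'. u' \<in> V \<Longrightarrow> adj v u' \<Longrightarrow> u' = u"
proof -
  have path0: "distinct [u0, v0]" "is_walk V adj [u0, v0]"
    using edge irrefl[of u0] by (auto simp: is_walk_def nth_Cons split: nat.splits)
  obtain p where p: "distinct p" "is_walk V adj p"
    and longest: "\<And>q. distinct q \<Longrightarrow> is_walk V adj q \<Longrightarrow> length q \<le> length p"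
    using longest_distinct_walk[OF fin path0] by blast
  have "2 \<le> length p"
    using longest[OF path0] by simp
  then have "p \<noteq> []" by auto
  define v where "v = last p"
  define u where "u = p ! (length p - 2)"
  have "adj (p ! i) (p ! (i + 1))" if "i + 1 < length p" for i
    using p that by (simp add: is_walk_def)
  then have "adj (p ! (length p - 2)) (p ! (length p - 2 + 1))"
    using \<open>2 \<le> length p\<close> by simp
  moreover have "length p - 2 + 1 = length p - 1"
    using \<open>2 \<le> length p\<close> by linarith
  ultimately have "adj u v"
    using \<open>p \<noteq> []\<close> by (simp add: u_def v_def last_conv_nth)
  moreover have "u \<in> V" "v \<in> V"
    using p \<open>2 \<le> length p\<close> unfolding is_walk_def u_def v_def by auto
  moreover have "u' = u" if "u' \<in> V" "adj v u'" for u'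
  proof (cases "u' \<in> set p")
    case False
    with p that have "distinct (p @ [u'])" "is_walk V adj (p @ [u'])"
      by (auto simp: v_def intro: is_walk_snoc)
    from longest[OF this] show ?thesis by simp
  next
    case True
    then obtain j where j: "j < length p" "p ! j = u'"
      by (auto simp: in_set_conv_nth)
    have "j \<noteq> length p - 1"
      using j that irrefl \<open>p \<noteq> []\<close> by (auto simp: v_def last_conv_nth)
    moreover have "\<not> j + 2 < length p"
      using acyclic_no_back_edge[OF acyclic p] that j by (auto simp: v_def)
    ultimately have "j = length p - 2"
      using j(1) by linarith
    with j(2) show ?thesis by (simp add: u_def)
  qed
  ultimately show ?thesis
    using that sym by blast
qed

lemma leaf_edge_removal_sums:
  fixes wt :: "'v \<Rightarrow> 'v \<Rightarrow> 'w::ab_group_add"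
  assumes fin: "finite V" and sym: "\<And>u v. adj u v \<Longrightarrow> adj v u" and wsym: "\<And>u v. wt u v = wt v u"
    and G_diff: "\<And>x y. x \<in> G \<Longrightarrow> y \<in> G \<Longrightarrow> x - y \<in> G"
    and sums: "\<And>z. z \<in> V \<Longrightarrow> (\<Sum>y\<in>{y\<in>V. adj z y}. wt z y) \<in> G"
    and leaf: "v \<in> V" "u \<in> V" "adj v u" "\<And>u'. u' \<in> V \<Longrightarrow> adj v u' \<Longrightarrow> u' = u"
    and "z \<in> V"
  shows "(\<Sum>y\<in>{y\<in>V. adj z y \<and> {z, y} \<noteq> {u, v}}. wt z y) \<in> G"
proof -
  have nbrs_v: "{y\<in>V. adj v y} = {u}"
    using leaf by blast
  consider "z = v" | "z = u" "z \<noteq> v" | "z \<noteq> u" "z \<noteq> v" by blast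
  then show ?thesis
  proof cases
    case 1
    then have "{y\<in>V. adj z y \<and> {z, y} \<noteq> {u, v}} = {}"
      using nbrs_v by auto
    then have "(\<Sum>y\<in>{y\<in>V. adj z y \<and> {z, y} \<noteq> {u, v}}. wt z y) = 0"
      by (simp only: sum.empty)
    moreover have "0 \<in> G"
      using G_diff[OF sums[OF leaf(1)] sums[OF leaf(1)]] by simp
    ultimately show ?thesis by simp
  next
    case 2
    have "wt z v = (\<Sum>y\<in>{y\<in>V. adj v y}. wt v y)"
      using 2 nbrs_v wsym by simp
    then have "wt z v \<in> G"
      using sums[OF leaf(1)] by simp
    moreover have "v \<in> {y\<in>V. adj z y}"
      using 2 leaf sym by blast
    moreover have "{y\<in>V. adj z y \<and> {z, y} \<noteq> {u, v}} = {y\<in>V. adj z y} - {v}"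
      using 2 by auto
    ultimately show ?thesis
      using G_diff[OF sums[OF \<open>z \<in> V\<close>]] fin by (simp add: sum_diff1)
  next
    case 3
    then have "{y\<in>V. adj z y \<and> {z, y} \<noteq> {u, v}} = {y\<in>V. adj z y}"
      by auto
    then show ?thesis
      using sums[OF \<open>z \<in> V\<close>] by simp
  qed
qed

lemma card_edges_remove_edge:
  assumes "finite V" and "v \<in> V" "u \<in> V" "adj v u"
  shows "card {(a, b). a \<in> V \<and> b \<in> V \<and> adj a b \<and> {a, b} \<noteq> {u, v}}
    < card {(a, b). a \<in> V \<and> b \<in> V \<and> adj a b}"
proof (rule psubset_card_mono)
  show "finite {(a, b). a \<in> V \<and> b \<in> V \<and> adj a b}"
    by (rule finite_subset[of _ "V \<times> V"]) (use assms(1) in auto)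
  have "(v, u) \<notin> {(a, b). a \<in> V \<and> b \<in> V \<and> adj a b \<and> {a, b} \<noteq> {u, v}}"
    by (simp add: insert_commute)
  with assms(2-4) show "{(a, b). a \<in> V \<and> b \<in> V \<and> adj a b \<and> {a, b} \<noteq> {u, v}}
      \<subset> {(a, b). a \<in> V \<and> b \<in> V \<and> adj a b}"
    by blast
qed

text \<open>Peeling off leaves: the weight of a leaf edge is the vertex sum at the leaf.\<close>

lemma forest_edge_weights_in_subgroup:
  fixes wt :: "'v \<Rightarrow> 'v \<Rightarrow> 'w::ab_group_add"
  assumes fin: "finite V" and sym: "\<And>u v. adj u v \<Longrightarrow> adj v u" and irrefl: "\<And>u. \<not> adj u u"
    and acyclic: "\<not> has_cycle V adj" and wsym: "\<And>u v. wt u v = wt v u"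
    and G_diff: "\<And>x y. x \<in> G \<Longrightarrow> y \<in> G \<Longrightarrow> x - y \<in> G"
    and sums: "\<And>z. z \<in> V \<Longrightarrow> (\<Sum>y\<in>{y\<in>V. adj z y}. wt z y) \<in> G"
    and "x \<in> V" "y \<in> V" "adj x y"
  shows "wt x y \<in> G"
  using sym irrefl acyclic sums assms(8-10)
proof (induction "card {(x, y). x \<in> V \<and> y \<in> V \<and> adj x y}" arbitrary: adj x y rule: less_induct)
  case less
  obtain v u where leaf: "v \<in> V" "u \<in> V" "adj v u" "\<And>u'. u' \<in> V \<Longrightarrow> adj v u' \<Longrightarrow> u' = u"
    using acyclic_graph_has_leaf[OF fin less.prems(1-3,5-7)] by blast
  define adj' where "adj' a b \<longleftrightarrow> adj a b \<and> {a, b} \<noteq> {u, v}" for a b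
  show ?case
  proof (cases "{x, y} = {u, v}")
    case True
    have "{y'\<in>V. adj v y'} = {u}"
      using leaf by blast
    then have "wt v u \<in> G"
      using less.prems(4)[OF leaf(1)] by simp
    with True wsym show ?thesis
      by (metis doubleton_eq_iff)
  next
    case False
    have fewer: "card {(a, b). a \<in> V \<and> b \<in> V \<and> adj' a b}
        < card {(a, b). a \<in> V \<and> b \<in> V \<and> adj a b}"
      using card_edges_remove_edge[where adj = adj, OF fin leaf(1-3)] by (simp add: adj'_def)
    have "\<not> has_cycle V adj'"
      using less.prems(3) has_cycle_mono[of V adj' adj] by (auto simp: adj'_def)
    moreover have "adj' b a" if "adj' a b" for a b
      using that less.prems(1) by (auto simp: adj'_def insert_commute)
    moreover have "\<not> adj' a a" for a
      using less.prems(2) by (simp add: adj'_def)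
    moreover have "(\<Sum>y\<in>{y\<in>V. adj' z y}. wt z y) \<in> G" if "z \<in> V" for z
      using leaf_edge_removal_sums[OF fin less.prems(1) wsym G_diff less.prems(4) leaf that]
      by (simp add: adj'_def)
    moreover have "adj' x y"
      using False less.prems(7) by (simp add: adj'_def)
    ultimately show ?thesis
      using less.hyps[OF fewer] less.prems(5,6) by blast
  qed
qed

section \<open>Factor counts in dendric subshifts\<close>

definition near_letter_counts :: "(int \<Rightarrow> 'a::finite) set \<Rightarrow> ('a list \<Rightarrow> int) \<Rightarrow> bool" where
  "near_letter_counts X \<phi> \<longleftrightarrow> (\<exists>c :: 'a \<Rightarrow> int. \<exists>K. \<forall>w\<in>lang X.
      \<bar>\<phi> w - (\<Sum>a\<in>UNIV. c a * int (occ_count w [a]))\<bar> \<le> K)"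

lemma near_letter_counts_diff:
  assumes "near_letter_counts X \<phi>" and "near_letter_counts X \<psi>"
  shows "near_letter_counts X (\<phi> - \<psi>)"
proof -
  obtain c K where c: "\<forall>w\<in>lang X. \<bar>\<phi> w - (\<Sum>a\<in>UNIV. c a * int (occ_count w [a]))\<bar> \<le> K"
    using assms(1) by (auto simp: near_letter_counts_def)
  obtain d L where d: "\<forall>w\<in>lang X. \<bar>\<psi> w - (\<Sum>a\<in>UNIV. d a * int (occ_count w [a]))\<bar> \<le> L"
    using assms(2) by (auto simp: near_letter_counts_def)
  have "\<bar>(\<phi> - \<psi>) w - (\<Sum>a\<in>UNIV. (c a - d a) * int (occ_count w [a]))\<bar> \<le> K + L"
    if "w \<in> lang X" for w
  proof -
    have "(\<Sum>a\<in>UNIV. (c a - d a) * int (occ_count w [a]))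
        = (\<Sum>a\<in>UNIV. c a * int (occ_count w [a])) - (\<Sum>a\<in>UNIV. d a * int (occ_count w [a]))"
      by (simp add: left_diff_distrib sum_subtractf)
    then show ?thesis
      using c d that by fastforce
  qed
  then show ?thesis
    unfolding near_letter_counts_def by (intro exI[of _ "\<lambda>a. c a - d a"] exI[of _ "K + L"] ballI)
qed

lemma near_letter_counts_perturb:
  assumes "near_letter_counts X \<phi>" and "\<And>w. w \<in> lang X \<Longrightarrow> \<bar>\<phi> w - \<psi> w\<bar> \<le> L"
  shows "near_letter_counts X \<psi>"
proof -
  obtain c K where c: "\<forall>w\<in>lang X. \<bar>\<phi> w - (\<Sum>a\<in>UNIV. c a * int (occ_count w [a]))\<bar> \<le> K"
    using assms(1) by (auto simp: near_letter_counts_def)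
  have "\<bar>\<psi> w - (\<Sum>a\<in>UNIV. c a * int (occ_count w [a]))\<bar> \<le> K + L" if "w \<in> lang X" for w
    using c assms(2)[OF that] that by fastforce
  then show ?thesis
    unfolding near_letter_counts_def by blast
qed

lemma near_letter_counts_Nil:
  fixes X :: "(int \<Rightarrow> 'a::finite) set"
  shows "near_letter_counts X (\<lambda>w. int (occ_count w []))"
proof -
  have "\<bar>int (occ_count w []) - (\<Sum>a\<in>UNIV. 1 * int (occ_count w [a]))\<bar> \<le> 1" for w :: "'a list"
    using occ_count_right_extensions[of w "[]"] by simp
  then show ?thesis
    unfolding near_letter_counts_def by (intro exI[of _ "\<lambda>_. 1"] exI[of _ 1] ballI)
qed

lemma near_letter_counts_letter:
  fixes X :: "(int \<Rightarrow> 'a::finite) set"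
  shows "near_letter_counts X (\<lambda>w. int (occ_count w [a]))"
proof -
  have "\<bar>int (occ_count w [a]) - (\<Sum>b\<in>UNIV. of_bool (b = a) * int (occ_count w [b]))\<bar> \<le> 0"
    for w :: "'a list"
    by simp
  then show ?thesis
    unfolding near_letter_counts_def by (intro exI[of _ "\<lambda>b. of_bool (b = a)"] exI[of _ 0] ballI)
qed

lemma balanced_on_if_near_letter_counts:
  assumes "balanced_on_letters X" and "near_letter_counts X (\<lambda>w. int (occ_count w v))"
  shows "balanced_on X v"
proof -
  obtain C :: "'a \<Rightarrow> nat" where C: "\<And>a w w'. w \<in> lang X \<Longrightarrow> w' \<in> lang X \<Longrightarrow>
      length w = length w' \<Longrightarrow> \<bar>int (occ_count w [a]) - int (occ_count w' [a])\<bar> \<le> int (C a)"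
    using assms(1) unfolding balanced_on_letters_def balanced_on_def by metis
  obtain c K where cK: "\<And>w. w \<in> lang X \<Longrightarrow>
      \<bar>int (occ_count w v) - (\<Sum>a\<in>UNIV. c a * int (occ_count w [a]))\<bar> \<le> K"
    using assms(2) unfolding near_letter_counts_def by blast
  define B where "B = 2 * K + (\<Sum>a\<in>UNIV. \<bar>c a\<bar> * int (C a))"
  have "\<bar>int (occ_count w v) - int (occ_count w' v)\<bar> \<le> int (nat B)"
    if w: "w \<in> lang X" "w' \<in> lang X" "length w = length w'" for w w'
  proof -
    have "\<bar>(\<Sum>a\<in>UNIV. c a * int (occ_count w [a])) - (\<Sum>a\<in>UNIV. c a * int (occ_count w' [a]))\<bar>
        = \<bar>\<Sum>a\<in>UNIV. c a * (int (occ_count w [a]) - int (occ_count w' [a]))\<bar>"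
      by (simp add: sum_subtractf right_diff_distrib)
    also have "\<dots> \<le> (\<Sum>a\<in>UNIV. \<bar>c a * (int (occ_count w [a]) - int (occ_count w' [a]))\<bar>)"
      by (rule sum_abs)
    also have "\<dots> \<le> (\<Sum>a\<in>UNIV. \<bar>c a\<bar> * int (C a))"
      by (intro sum_mono) (simp add: abs_mult mult_left_mono C[OF w])
    finally show ?thesis
      using cK[OF w(1)] cK[OF w(2)] unfolding B_def by linarith
  qed
  then show ?thesis
    unfolding balanced_on_def by blast
qed

lemma ext_adj_sym: "ext_adj X w x y = ext_adj X w y x"
  by (cases x; cases y) auto

lemma ext_adj_irrefl: "\<not> ext_adj X w x x"
  by (cases x) auto

definition ext_edge_count :: "'a list \<Rightarrow> 'a + 'a \<Rightarrow> 'a + 'a \<Rightarrow> 'a list \<Rightarrow> int" where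
  "ext_edge_count w x y = (case (x, y) of
       (Inl a, Inr b) \<Rightarrow> (\<lambda>s. int (occ_count s (a # w @ [b])))
     | (Inr b, Inl a) \<Rightarrow> (\<lambda>s. int (occ_count s (a # w @ [b])))
     | _ \<Rightarrow> 0)"

definition ext_vertex_word :: "'a list \<Rightarrow> 'a + 'a \<Rightarrow> 'a list" where
  "ext_vertex_word w z = (case z of Inl a \<Rightarrow> a # w | Inr b \<Rightarrow> w @ [b])"

lemma ext_edge_count_sym: "ext_edge_count w x y = ext_edge_count w y x"
  by (cases x; cases y) (auto simp: ext_edge_count_def)

lemma sum_fun_apply: "(\<Sum>y\<in>A. f y) s = (\<Sum>y\<in>A. f y s)"
  by (induction A rule: infinite_finite_induct) auto

lemma ext_vertex_sum:
  fixes X :: "(int \<Rightarrow> 'a::finite) set"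
  assumes "s \<in> lang X"
  shows "\<bar>(\<Sum>y\<in>{y \<in> ext_vertices X w. ext_adj X w z y}. ext_edge_count w z y) s
           - int (occ_count s (ext_vertex_word w z))\<bar> \<le> 1"
proof (cases z)
  case (Inl a)
  have "{y \<in> ext_vertices X w. ext_adj X w z y} = Inr ` {b. a # w @ [b] \<in> lang X}"
  proof (intro set_eqI iffI)
    fix y assume "y \<in> {y \<in> ext_vertices X w. ext_adj X w z y}"
    with Inl show "y \<in> Inr ` {b. a # w @ [b] \<in> lang X}"
      by (cases y) (auto simp: bi_ext_def)
  qed (auto simp: Inl ext_vertices_def right_ext_def bi_ext_def intro: lang_Cons_snoc_suffix)
  then have "(\<Sum>y\<in>{y \<in> ext_vertices X w. ext_adj X w z y}. ext_edge_count w z y) s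
      = (\<Sum>b\<in>{b. a # w @ [b] \<in> lang X}. int (occ_count s (a # w @ [b])))"
    by (simp add: sum_fun_apply sum.reindex Inl ext_edge_count_def)
  also have "\<dots> = (\<Sum>b\<in>UNIV. int (occ_count s (a # w @ [b])))"
    by (rule sum.mono_neutral_left) (auto simp: occ_count_not_in_lang[OF assms])
  finally show ?thesis
    using occ_count_right_extensions[of s "a # w"]
    by (simp add: Inl ext_vertex_word_def abs_minus_commute)
next
  case (Inr b)
  have "{y \<in> ext_vertices X w. ext_adj X w z y} = Inl ` {a. a # w @ [b] \<in> lang X}"
  proof (intro set_eqI iffI)
    fix y assume "y \<in> {y \<in> ext_vertices X w. ext_adj X w z y}"
    with Inr show "y \<in> Inl ` {a. a # w @ [b] \<in> lang X}"
      by (cases y) (auto simp: bi_ext_def)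
  qed (auto simp: Inr ext_vertices_def left_ext_def bi_ext_def intro: lang_Cons_snoc_prefix)
  then have "(\<Sum>y\<in>{y \<in> ext_vertices X w. ext_adj X w z y}. ext_edge_count w z y) s
      = (\<Sum>a\<in>{a. a # w @ [b] \<in> lang X}. int (occ_count s (a # w @ [b])))"
    by (simp add: sum_fun_apply sum.reindex Inr ext_edge_count_def)
  also have "\<dots> = (\<Sum>a\<in>UNIV. int (occ_count s (a # (w @ [b]))))"
    by (rule sum.mono_neutral_left) (auto simp: occ_count_not_in_lang[OF assms])
  finally show ?thesis
    using occ_count_left_extensions[of s "w @ [b]"]
    by (simp add: Inr ext_vertex_word_def abs_minus_commute)
qed

lemma near_letter_counts_ext_edge:
  fixes X :: "(int \<Rightarrow> 'a::finite) set"
  assumes acyclic: "\<not> has_cycle (ext_vertices X w) (ext_adj X w)"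
    and vertex_words: "\<And>z. z \<in> ext_vertices X w \<Longrightarrow>
      near_letter_counts X (\<lambda>s. int (occ_count s (ext_vertex_word w z)))"
    and "a # w @ [b] \<in> lang X"
  shows "near_letter_counts X (\<lambda>s. int (occ_count s (a # w @ [b])))"
proof -
  have "Inl a \<in> ext_vertices X w" "Inr b \<in> ext_vertices X w" "ext_adj X w (Inl a) (Inr b)"
    using assms(3) by (auto simp: ext_vertices_def left_ext_def right_ext_def bi_ext_def
        intro: lang_Cons_snoc_prefix lang_Cons_snoc_suffix)
  then have "ext_edge_count w (Inl a) (Inr b) \<in> Collect (near_letter_counts X)"
  proof (rule forest_edge_weights_in_subgroup[where V = "ext_vertices X w" and adj = "ext_adj X w"
        and wt = "ext_edge_count w" and G = "Collect (near_letter_counts X)", rotated -3])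
    show "finite (ext_vertices X w)" by simp
    show "ext_adj X w y x" if "ext_adj X w x y" for x y
      using that ext_adj_sym[of X w x y] by simp
    show "\<not> ext_adj X w x x" for x
      by (rule ext_adj_irrefl)
    show "ext_edge_count w x y = ext_edge_count w y x" for x y
      by (rule ext_edge_count_sym)
    show "\<phi> - \<psi> \<in> Collect (near_letter_counts X)"
      if "\<phi> \<in> Collect (near_letter_counts X)" "\<psi> \<in> Collect (near_letter_counts X)" for \<phi> \<psi>
      using that near_letter_counts_diff by simp
    show "(\<Sum>y\<in>{y \<in> ext_vertices X w. ext_adj X w z y}. ext_edge_count w z y)
        \<in> Collect (near_letter_counts X)" if "z \<in> ext_vertices X w" for z
    proof -
      have "near_letter_counts X (\<Sum>y\<in>{y \<in> ext_vertices X w. ext_adj X w z y}. ext_edge_count w z y)"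
        by (rule near_letter_counts_perturb[OF vertex_words[OF that]])
          (use ext_vertex_sum in \<open>simp add: abs_minus_commute\<close>)
      then show ?thesis by simp
    qed
  qed (rule acyclic)
  then show ?thesis
    by (simp add: ext_edge_count_def)
qed

lemma near_letter_counts_occ_count:
  fixes X :: "(int \<Rightarrow> 'a::finite) set"
  assumes acyclic: "\<And>w. w \<in> lang X \<Longrightarrow> \<not> has_cycle (ext_vertices X w) (ext_adj X w)"
    and "v \<in> lang X"
  shows "near_letter_counts X (\<lambda>s. int (occ_count s v))"
  using assms(2)
proof (induction "length v" arbitrary: v rule: less_induct)
  case less
  consider "v = []" | a where "v = [a]" | a w b where "v = a # w @ [b]"
    by (metis append_butlast_last_id neq_Nil_conv)
  then show ?case
  proof cases
    case (3 a w b)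
    have "w \<in> lang X"
      using less.prems 3 lang_infix[of "[a]" w "[b]"] by simp
    have "near_letter_counts X (\<lambda>s. int (occ_count s (ext_vertex_word w z)))"
      if "z \<in> ext_vertices X w" for z
    proof (rule less.hyps)
      show "length (ext_vertex_word w z) < length v" "ext_vertex_word w z \<in> lang X"
        using that 3 by (auto simp: ext_vertex_word_def ext_vertices_def left_ext_def right_ext_def)
    qed
    with acyclic[OF \<open>w \<in> lang X\<close>] less.prems 3 show ?thesis
      by (simp add: near_letter_counts_ext_edge)
  qed (simp_all add: near_letter_counts_Nil near_letter_counts_letter)
qed

lemma balanced_on_factors_if_letters:
  fixes X :: "(int \<Rightarrow> 'a::finite) set"
  assumes "dendric X" and "balanced_on_letters X"
  shows "balanced_on_factors X"
proof -
  have acyclic: "\<not> has_cycle (ext_vertices X w) (ext_adj X w)" if "w \<in> lang X" for w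
    using assms(1) that by (auto simp: dendric_def is_tree_def)
  have "balanced_on X v" if "v \<in> lang X" for v
    by (rule balanced_on_if_near_letter_counts[OF assms(2)
          near_letter_counts_occ_count[OF acyclic that]])
  then show ?thesis
    unfolding balanced_on_factors_def by blast
qed

lemma balanced_on_letters_if_factors:
  assumes "balanced_on_factors X"
  shows "balanced_on_letters X"
  unfolding balanced_on_letters_def
proof
  fix a
  show "balanced_on X [a]"
  proof (cases "[a] \<in> lang X")
    case True
    with assms show ?thesis by (simp add: balanced_on_factors_def)
  next
    case False
    then show ?thesis
      unfolding balanced_on_def by (intro exI[of _ 0]) (simp add: occ_count_not_in_lang)
  qed
qed

section \<open>Linear discrepancy of balanced factors\<close>

lemma quasi_additive_ratio_le:
  fixes a :: "nat \<Rightarrow> real"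
  assumes quasi: "\<And>m n. \<bar>a (m + n) - a m - a n\<bar> \<le> D" and "m \<ge> 1" "n \<ge> 1"
  shows "(a m - D) / real m \<le> (a n + D) / real n"
proof -
  have super: "real (Suc k) * (a m - D) \<le> a (Suc k * m) - D" for k m
  proof (induction k)
    case (Suc k)
    have "a (Suc k * m) + a m - D \<le> a (m + Suc k * m)"
      using abs_le_D2[OF quasi[of m "Suc k * m"]] by linarith
    moreover have "real (Suc (Suc k)) * (a m - D) = real (Suc k) * (a m - D) + (a m - D)"
      by (simp add: algebra_simps)
    ultimately show ?case
      using Suc.IH by simp
  qed simp
  have sub: "a (Suc k * m) + D \<le> real (Suc k) * (a m + D)" for k m
  proof (induction k)
    case (Suc k)
    have "a (m + Suc k * m) \<le> a (Suc k * m) + a m + D"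
      using abs_le_D1[OF quasi[of m "Suc k * m"]] by linarith
    moreover have "real (Suc (Suc k)) * (a m + D) = real (Suc k) * (a m + D) + (a m + D)"
      by (simp add: algebra_simps)
    ultimately show ?case
      using Suc.IH by simp
  qed simp
  from \<open>m \<ge> 1\<close> obtain j where "m = Suc j"
    by (cases m) auto
  from \<open>n \<ge> 1\<close> obtain k where "n = Suc k"
    by (cases n) auto
  have "real n * (a m - D) \<le> a (n * m) - D"
    using super[of k m] \<open>n = Suc k\<close> by simp
  also have "\<dots> \<le> a (m * n) + D"
    using quasi[of 0 0] by (simp add: mult.commute)
  also have "\<dots> \<le> real m * (a n + D)"
    using sub[of j n] \<open>m = Suc j\<close> by simp
  finally show ?thesis
    using assms(2,3) by (simp add: field_simps)
qed

lemma quasi_additive_near_linear: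
  fixes a :: "nat \<Rightarrow> real"
  assumes quasi: "\<And>m n. \<bar>a (m + n) - a m - a n\<bar> \<le> D"
  obtains \<mu> where "\<And>n. n \<ge> 1 \<Longrightarrow> \<bar>a n - real n * \<mu>\<bar> \<le> D"
proof -
  let ?\<mu> = "SUP m\<in>{1..}. (a m - D) / real m"
  have "bdd_above ((\<lambda>m. (a m - D) / real m) ` {1..})"
    by (rule bdd_aboveI2[where M = "a 1 + D"])
      (use quasi_additive_ratio_le[OF quasi, of _ 1] in simp)
  then have "(a n - D) / real n \<le> ?\<mu>" if "n \<ge> 1" for n
    using that by (auto intro: cSUP_upper)
  moreover have "?\<mu> \<le> (a n + D) / real n" if "n \<ge> 1" for n
    using that quasi_additive_ratio_le[OF quasi] by (auto intro: cSUP_least)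
  ultimately have "\<bar>a n - real n * ?\<mu>\<bar> \<le> D" if "n \<ge> 1" for n
    using that by (simp add: field_simps abs_le_iff)
  then show ?thesis
    by (rule that)
qed

lemma balanced_on_real_bound:
  assumes "balanced_on X v"
  obtains C :: real where "\<And>w w'. w \<in> lang X \<Longrightarrow> w' \<in> lang X \<Longrightarrow> length w = length w' \<Longrightarrow>
    \<bar>real (occ_count w v) - real (occ_count w' v)\<bar> \<le> C"
proof -
  obtain C :: nat where C: "\<And>w w'. w \<in> lang X \<Longrightarrow> w' \<in> lang X \<Longrightarrow> length w = length w' \<Longrightarrow>
      \<bar>int (occ_count w v) - int (occ_count w' v)\<bar> \<le> int C"
    using assms unfolding balanced_on_def by blast
  have "\<bar>real (occ_count w v) - real (occ_count w' v)\<bar> \<le> real C"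
    if "w \<in> lang X" "w' \<in> lang X" "length w = length w'" for w w'
  proof -
    have "real_of_int \<bar>int (occ_count w v) - int (occ_count w' v)\<bar> \<le> real_of_int (int C)"
      using C[OF that] by (simp only: of_int_le_iff)
    then show ?thesis by simp
  qed
  then show ?thesis
    by (rule that)
qed

lemma occ_count_word_at_quasi_additive:
  assumes "x \<in> X"
    and C: "\<And>w w'. w \<in> lang X \<Longrightarrow> w' \<in> lang X \<Longrightarrow> length w = length w' \<Longrightarrow>
      \<bar>real (occ_count w v) - real (occ_count w' v)\<bar> \<le> C"
  shows "\<bar>real (occ_count (word_at x 0 (m + n)) v) - real (occ_count (word_at x 0 m) v)
           - real (occ_count (word_at x 0 n) v)\<bar> \<le> 2 * C + real (length v) + 1"
proof -
  define p where "p = take m (word_at x 0 (m + n))"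
  define q where "q = drop m (word_at x 0 (m + n))"
  have "p \<in> lang X" "q \<in> lang X"
    using word_at_in_lang[OF assms(1), of 0 "m + n"] lang_infix[of "[]" p q] lang_infix[of p q "[]"]
    by (simp_all add: p_def q_def)
  then have "\<bar>real (occ_count p v) - real (occ_count (word_at x 0 m) v)\<bar> \<le> C"
    and "\<bar>real (occ_count q v) - real (occ_count (word_at x 0 n) v)\<bar> \<le> C"
    using C word_at_in_lang[OF assms(1)] by (simp_all add: p_def q_def)
  moreover have "real (occ_count (word_at x 0 (m + n)) v) = real (occ_count (p @ q) v)"
    by (simp add: p_def q_def)
  ultimately show ?thesis
    using occ_count_append_le[of p q v] occ_count_append_ge[of p v q] by linarith
qed

lemma balanced_on_linear_discrepancy:
  assumes "X \<noteq> {}" and "balanced_on X v"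
  obtains \<mu> K where "\<And>w. w \<in> lang X \<Longrightarrow> \<bar>real (occ_count w v) - real (length w) * \<mu>\<bar> \<le> K"
proof -
  obtain C where C: "\<And>w w'. w \<in> lang X \<Longrightarrow> w' \<in> lang X \<Longrightarrow> length w = length w' \<Longrightarrow>
      \<bar>real (occ_count w v) - real (occ_count w' v)\<bar> \<le> C"
    using balanced_on_real_bound[OF assms(2)] by blast
  obtain x where "x \<in> X"
    using assms(1) by blast
  define a where "a n = real (occ_count (word_at x 0 n) v)" for n
  have "\<bar>a (m + n) - a m - a n\<bar> \<le> 2 * C + real (length v) + 1" for m n
    unfolding a_def by (rule occ_count_word_at_quasi_additive[OF \<open>x \<in> X\<close> C])
  then obtain \<mu> where \<mu>: "\<And>n. n \<ge> 1 \<Longrightarrow> \<bar>a n - real n * \<mu>\<bar> \<le> 2 * C + real (length v) + 1"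
    using quasi_additive_near_linear by blast
  have "\<bar>real (occ_count w v) - real (length w) * \<mu>\<bar> \<le> 3 * C + real (length v) + 1"
    if "w \<in> lang X" for w
  proof (cases "length w = 0")
    case True
    then show ?thesis
      using occ_count_le_length[of w v] C[OF that that] by simp
  next
    case False
    then have "length w \<ge> 1"
      by linarith
    then have "\<bar>a (length w) - real (length w) * \<mu>\<bar> \<le> 2 * C + real (length v) + 1"
      by (rule \<mu>)
    moreover have "\<bar>real (occ_count w v) - a (length w)\<bar> \<le> C"
      using C[OF that word_at_in_lang[OF \<open>x \<in> X\<close>], of 0] by (simp add: a_def)
    ultimately show ?thesis
      by linarith
  qed
  with that show ?thesis by blast
qed

locale linear_discrepancy =
  fixes X :: "(int \<Rightarrow> 'a) set" and v :: "'a list" and \<mu> K :: real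
  assumes discrepancy: "\<And>w. w \<in> lang X \<Longrightarrow> \<bar>real (occ_count w v) - real (length w) * \<mu>\<bar> \<le> K"
begin

lemma frequency: "is_frequency X v \<mu>"
  unfolding is_frequency_def
proof (intro allI impI)
  fix \<epsilon> :: real assume "\<epsilon> > 0"
  have "\<bar>real (occ_count w v) / real (length w) - \<mu>\<bar> < \<epsilon>"
    if "w \<in> lang X" "length w \<ge> nat \<lceil>\<bar>K\<bar> / \<epsilon>\<rceil> + 1" for w
  proof -
    have "\<bar>K\<bar> / \<epsilon> < real (length w)"
      using real_nat_ceiling_ge[of "\<bar>K\<bar> / \<epsilon>"] of_nat_mono[OF that(2), where 'a = real] by simp
    then have "\<bar>real (occ_count w v) - real (length w) * \<mu>\<bar> < \<epsilon> * real (length w)"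
      using \<open>\<epsilon> > 0\<close> discrepancy[OF that(1)] abs_ge_self[of K]
      by (simp add: pos_divide_less_eq mult.commute)
    moreover have "0 < length w"
      using that(2) by linarith
    then have "0 < real (length w)"
      by simp
    moreover from this have "real (occ_count w v) / real (length w) - \<mu>
        = (real (occ_count w v) - real (length w) * \<mu>) / real (length w)"
      by (simp add: field_simps)
    ultimately show ?thesis
      by (simp add: abs_divide pos_divide_less_eq mult.commute)
  qed
  then show "\<exists>N. \<forall>w\<in>lang X. N \<le> length w \<longrightarrow> \<bar>real (occ_count w v) / real (length w) - \<mu>\<bar> < \<epsilon>"
    by blast
qed

definition remainder_bound :: real where
  "remainder_bound = \<bar>K\<bar> + real (length v) * \<bar>\<mu>\<bar> + 1"

lemma window_discrepancy:
  assumes "x \<in> X"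
  shows "\<bar>real (card {i. i < n \<and> occurs_at v x (a + int i)}) - real n * \<mu>\<bar> \<le> remainder_bound"
proof -
  let ?A = "{i. i < n \<and> occurs_at v x (a + int i)}"
  let ?A' = "{i. i \<le> n \<and> occurs_at v x (a + int i)}"
  have "occ_count (word_at x a (n + length v)) v = card ?A'"
    by (simp add: occ_count_eq_card occ_positions_word_at)
  then have "\<bar>real (card ?A') - real (n + length v) * \<mu>\<bar> \<le> K"
    using discrepancy[OF word_at_in_lang[OF assms, of a "n + length v"]] by simp
  moreover have "card ?A \<le> card ?A'"
    by (rule card_mono) auto
  moreover have "card ?A' \<le> card (insert n ?A)"
    by (rule card_mono) auto
  moreover have "card (insert n ?A) \<le> card ?A + 1"
    by (simp add: card_insert_if)
  moreover have "\<bar>real (length v) * \<mu>\<bar> = real (length v) * \<bar>\<mu>\<bar>"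
    by (simp add: abs_mult)
  ultimately show ?thesis
    unfolding remainder_bound_def by (simp add: algebra_simps)
qed

lemma funpow_shift: "(shift ^^ i) x = (\<lambda>j. x (j + int i))"
  by (induction i arbitrary: x) (simp_all add: shift_def algebra_simps)

lemma funpow_shift_in_subshift: "subshift X \<Longrightarrow> x \<in> X \<Longrightarrow> (shift ^^ i) x \<in> X"
  by (induction i) (auto simp: subshift_def)

lemma bounded_remainder:
  assumes "subshift X"
  shows "bounded_remainder_set X v \<mu>"
  unfolding bounded_remainder_set_def
proof (intro exI ballI allI)
  fix x n assume "x \<in> X"
  then have "{i. i < n \<and> (shift ^^ i) x \<in> cylinder X v} = {i. i < n \<and> occurs_at v x (0 + int i)}"
    using funpow_shift_in_subshift[OF assms]
    by (auto simp: cylinder_def occurs_at_def funpow_shift add.commute)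
  then show "\<bar>real (card {i. i < n \<and> (shift ^^ i) x \<in> cylinder X v}) - real n * \<mu>\<bar>
      \<le> remainder_bound"
    using window_discrepancy[OF \<open>x \<in> X\<close>, of n 0] by simp
qed

end

section \<open>The frequency as an eigenvalue\<close>

lemma topspace_full_shift_top [simp]: "topspace full_shift_top = UNIV"
  by (simp add: full_shift_top_def)

lemma openin_full_shift_top_local:
  assumes "finite J" and local: "\<And>x y. \<forall>j\<in>J. x j = y j \<Longrightarrow> P x \<Longrightarrow> P y"
  shows "openin full_shift_top {x. P x}"
proof -
  define U where "U y = (\<Pi>\<^sub>E j\<in>UNIV. if j \<in> J then {y j} else UNIV)" for y :: "int \<Rightarrow> 'a"
  have U: "x \<in> U y \<longleftrightarrow> (\<forall>j\<in>J. x j = y j)" for x y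
    by (auto simp: U_def PiE_iff)
  have "openin full_shift_top (U y)" for y
    unfolding U_def full_shift_top_def
    by (rule product_topology_basis) (auto intro: finite_subset[OF _ assms(1)])
  moreover have "{x. P x} = (\<Union>y\<in>{x. P x}. U y)"
  proof (intro equalityI subsetI)
    fix z assume "z \<in> (\<Union>y\<in>{x. P x}. U y)"
    then obtain y where "P y" "\<forall>j\<in>J. y j = z j"
      using U by fastforce
    with local show "z \<in> {x. P x}" by blast
  qed (use U in blast)
  ultimately show ?thesis
    by (metis (no_types, lifting) openin_Union imageE)
qed

lemma shift_in_subshift: "subshift X \<Longrightarrow> x \<in> X \<Longrightarrow> shift x \<in> X"
  unfolding subshift_def by blast

lemma minimal_subshift_closed_invariant:
  assumes minimal: "minimal_subshift X"
    and closed: "closedin (subtopology full_shift_top X) {x \<in> X. P x}"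
    and invariant: "\<And>x. x \<in> X \<Longrightarrow> P (shift x) \<longleftrightarrow> P x"
    and "x \<in> X" "P x" "y \<in> X"
  shows "P y"
proof -
  let ?Y = "{x \<in> X. P x}"
  have "subshift X" "X \<noteq> {}"
    using minimal by (auto simp: minimal_subshift_def)
  have "closedin full_shift_top ?Y"
    using closed \<open>subshift X\<close> by (auto simp: subshift_def intro: closedin_trans_full)
  moreover have "shift ` ?Y = ?Y"
  proof
    show "shift ` ?Y \<subseteq> ?Y"
      using invariant shift_in_subshift[OF \<open>subshift X\<close>] by auto
    show "?Y \<subseteq> shift ` ?Y"
    proof
      fix z assume "z \<in> ?Y"
      then obtain z' where "z' \<in> X" "z = shift z'"
        using \<open>subshift X\<close> by (auto simp: subshift_def)
      with \<open>z \<in> ?Y\<close> invariant show "z \<in> shift ` ?Y" by auto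
    qed
  qed
  ultimately have "subshift ?Y"
    by (simp add: subshift_def)
  then have "?Y = X"
    using minimal \<open>x \<in> X\<close> \<open>P x\<close> unfolding minimal_subshift_def by blast
  with \<open>y \<in> X\<close> show ?thesis by blast
qed

definition cocycle_sum :: "(int \<Rightarrow> real) \<Rightarrow> int \<Rightarrow> real" where
  "cocycle_sum f k = (if 0 \<le> k then (\<Sum>i<nat k. f (int i)) else - (\<Sum>i<nat (- k). f (k + int i)))"

lemma cocycle_sum_shift: "cocycle_sum (\<lambda>i. f (i + 1)) k = cocycle_sum f (k + 1) - f 0"
proof (cases "0 \<le> k")
  case True
  then have "cocycle_sum f (k + 1) = (\<Sum>i<Suc (nat k). f (int i))"
    by (simp add: cocycle_sum_def nat_add_distrib)
  also have "\<dots> = f 0 + (\<Sum>i<nat k. f (int (Suc i)))"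
    by (rule trans[OF sum.lessThan_Suc_shift]) simp
  also have "(\<Sum>i<nat k. f (int (Suc i))) = cocycle_sum (\<lambda>i. f (i + 1)) k"
    using True by (simp add: cocycle_sum_def add.commute)
  finally show ?thesis by simp
next
  case False
  then obtain j where j: "nat (- k) = Suc j"
    by (cases "nat (- k)") auto
  then have kj: "k + int j + 1 = 0"
    using False by linarith
  have "cocycle_sum (\<lambda>i. f (i + 1)) k = - (\<Sum>i<Suc j. f (k + int i + 1))"
    using False j by (simp add: cocycle_sum_def)
  also have "\<dots> = - (\<Sum>i<j. f (k + int i + 1)) - f 0"
    using kj by simp
  also have "- (\<Sum>i<j. f (k + int i + 1)) = cocycle_sum f (k + 1)"
  proof (cases "j = 0")
    case True
    with kj show ?thesis by (simp add: cocycle_sum_def)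
  next
    case False
    with kj have "\<not> 0 \<le> k + 1" "nat (- (k + 1)) = j"
      by linarith+
    then show ?thesis by (simp add: cocycle_sum_def algebra_simps)
  qed
  finally show ?thesis .
qed

text \<open>Gottschalk--Hedlund: the two-sided Birkhoff sums of \<open>1_[v] - \<mu>\<close> are bounded, so their
  supremum \<open>u\<close> satisfies \<open>u \<circ> T = u - (1_[v] - \<mu>)\<close>. It is lower semicontinuous and the
  infimum is upper semicontinuous; their difference is invariant and lower semicontinuous,
  hence constant by minimality, which makes \<open>u\<close> continuous.\<close>

locale minimal_linear_discrepancy = linear_discrepancy +
  assumes minimal: "minimal_subshift X"
begin

lemma subshift: "subshift X"
  using minimal by (simp add: minimal_subshift_def)

definition deviation :: "(int \<Rightarrow> 'a) \<Rightarrow> int \<Rightarrow> real" where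
  "deviation x i = of_bool (occurs_at v x i) - \<mu>"

definition birkhoff_sum :: "(int \<Rightarrow> 'a) \<Rightarrow> int \<Rightarrow> real" where
  "birkhoff_sum x = cocycle_sum (deviation x)"

lemma sum_deviation:
  "(\<Sum>i<n. deviation x (a + int i))
     = real (card {i. i < n \<and> occurs_at v x (a + int i)}) - real n * \<mu>"
proof (induction n)
  case (Suc n)
  have "{i. i < Suc n \<and> occurs_at v x (a + int i)} =
        (if occurs_at v x (a + int n) then insert n else id) {i. i < n \<and> occurs_at v x (a + int i)}"
    by (auto simp: less_Suc_eq)
  with Suc show ?case
    by (simp add: deviation_def algebra_simps)
qed simp

lemma birkhoff_sum_bounded:
  assumes "x \<in> X"
  shows "\<bar>birkhoff_sum x k\<bar> \<le> remainder_bound"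
proof (cases "0 \<le> k")
  case True
  then show ?thesis
    using window_discrepancy[OF assms, of "nat k" 0] sum_deviation[where n = "nat k" and a = 0]
    by (simp add: birkhoff_sum_def cocycle_sum_def)
next
  case False
  then show ?thesis
    using window_discrepancy[OF assms, of "nat (- k)" k]
      sum_deviation[where n = "nat (- k)" and a = k]
    by (simp add: birkhoff_sum_def cocycle_sum_def)
qed

lemma deviation_shift: "deviation (shift x) i = deviation x (i + 1)"
  by (simp add: deviation_def occurs_at_def shift_def algebra_simps)

lemma birkhoff_sum_shift: "birkhoff_sum (shift x) k = birkhoff_sum x (k + 1) - deviation x 0"
  using cocycle_sum_shift[of "deviation x" k]
  by (simp add: birkhoff_sum_def deviation_shift[abs_def])

lemma birkhoff_sum_local:
  assumes "\<forall>j\<in>{- \<bar>k\<bar>..<\<bar>k\<bar> + int (length v)}. x j = y j"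
  shows "birkhoff_sum x k = birkhoff_sum y k"
proof -
  have "deviation x i = deviation y i" if "- \<bar>k\<bar> \<le> i" "i < \<bar>k\<bar>" for i
    using assms that by (auto simp: deviation_def occurs_at_def)
  then show ?thesis
    unfolding birkhoff_sum_def cocycle_sum_def by (auto intro!: sum.cong)
qed

lemma openin_birkhoff_sum_diff: "openin full_shift_top {x. r < birkhoff_sum x k - birkhoff_sum x m}"
proof (rule openin_full_shift_top_local)
  let ?J = "{- \<bar>k\<bar>..<\<bar>k\<bar> + int (length v)} \<union> {- \<bar>m\<bar>..<\<bar>m\<bar> + int (length v)}"
  show "finite ?J" by simp
  fix x y :: "int \<Rightarrow> 'a"
  assume "\<forall>j\<in>?J. x j = y j" and "r < birkhoff_sum x k - birkhoff_sum x m"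
  moreover from \<open>\<forall>j\<in>?J. x j = y j\<close>
  have "birkhoff_sum x k = birkhoff_sum y k" "birkhoff_sum x m = birkhoff_sum y m"
    by (simp_all add: birkhoff_sum_local)
  ultimately show "r < birkhoff_sum y k - birkhoff_sum y m" by simp
qed

lemma openin_birkhoff_sum_gt: "openin full_shift_top {x. r < birkhoff_sum x k}"
  by (rule openin_full_shift_top_local[of "{- \<bar>k\<bar>..<\<bar>k\<bar> + int (length v)}"])
    (auto dest: birkhoff_sum_local)

lemma openin_birkhoff_sum_lt: "openin full_shift_top {x. birkhoff_sum x k < r}"
  by (rule openin_full_shift_top_local[of "{- \<bar>k\<bar>..<\<bar>k\<bar> + int (length v)}"])
    (auto dest: birkhoff_sum_local)

definition birkhoff_sup :: "(int \<Rightarrow> 'a) \<Rightarrow> real" where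
  "birkhoff_sup x = (SUP k. birkhoff_sum x k)"

definition birkhoff_inf :: "(int \<Rightarrow> 'a) \<Rightarrow> real" where
  "birkhoff_inf x = (INF k. birkhoff_sum x k)"

lemma bdd_birkhoff_sum:
  assumes "x \<in> X"
  shows "bdd_above (range (birkhoff_sum x))" and "bdd_below (range (birkhoff_sum x))"
proof -
  have "birkhoff_sum x k \<le> remainder_bound" "- remainder_bound \<le> birkhoff_sum x k" for k
    using birkhoff_sum_bounded[OF assms, of k] by linarith+
  then show "bdd_above (range (birkhoff_sum x))" "bdd_below (range (birkhoff_sum x))"
    by (auto intro!: bdd_aboveI[of _ remainder_bound] bdd_belowI[of _ "- remainder_bound"])
qed

lemma less_birkhoff_sup_iff: "x \<in> X \<Longrightarrow> r < birkhoff_sup x \<longleftrightarrow> (\<exists>k. r < birkhoff_sum x k)"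
  unfolding birkhoff_sup_def by (simp add: less_cSUP_iff bdd_birkhoff_sum)

lemma birkhoff_inf_less_iff: "x \<in> X \<Longrightarrow> birkhoff_inf x < r \<longleftrightarrow> (\<exists>k. birkhoff_sum x k < r)"
  unfolding birkhoff_inf_def by (simp add: cINF_less_iff bdd_birkhoff_sum)

lemma range_birkhoff_sum_shift:
  "range (birkhoff_sum (shift x)) = (\<lambda>t. t - deviation x 0) ` range (birkhoff_sum x)"
proof (intro set_eqI iffI)
  fix t assume "t \<in> range (birkhoff_sum (shift x))"
  then show "t \<in> (\<lambda>t. t - deviation x 0) ` range (birkhoff_sum x)"
    by (auto simp: birkhoff_sum_shift)
next
  fix t assume "t \<in> (\<lambda>t. t - deviation x 0) ` range (birkhoff_sum x)"
  then obtain k where "t = birkhoff_sum x k - deviation x 0"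
    by auto
  then have "t = birkhoff_sum (shift x) (k - 1)"
    by (simp add: birkhoff_sum_shift)
  then show "t \<in> range (birkhoff_sum (shift x))"
    by auto
qed

lemma birkhoff_sup_shift:
  assumes "x \<in> X"
  shows "birkhoff_sup (shift x) = birkhoff_sup x - deviation x 0"
  unfolding birkhoff_sup_def range_birkhoff_sum_shift
  by (rule continuous_at_Sup_mono[symmetric])
    (auto simp: mono_def bdd_birkhoff_sum[OF assms] intro!: continuous_intros)

lemma birkhoff_inf_shift:
  assumes "x \<in> X"
  shows "birkhoff_inf (shift x) = birkhoff_inf x - deviation x 0"
  unfolding birkhoff_inf_def range_birkhoff_sum_shift
  by (rule continuous_at_Inf_mono[symmetric])
    (auto simp: mono_def bdd_birkhoff_sum[OF assms] intro!: continuous_intros)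

lemma less_birkhoff_oscillation_iff:
  assumes "x \<in> X"
  shows "t < birkhoff_sup x - birkhoff_inf x \<longleftrightarrow> (\<exists>k m. t < birkhoff_sum x k - birkhoff_sum x m)"
proof
  assume "t < birkhoff_sup x - birkhoff_inf x"
  define \<delta> where "\<delta> = (birkhoff_sup x - birkhoff_inf x - t) / 2"
  have "birkhoff_sup x - \<delta> < birkhoff_sup x" "birkhoff_inf x < birkhoff_inf x + \<delta>"
    using \<open>t < birkhoff_sup x - birkhoff_inf x\<close> by (simp_all add: \<delta>_def)
  then obtain k m
    where "birkhoff_sup x - \<delta> < birkhoff_sum x k" "birkhoff_sum x m < birkhoff_inf x + \<delta>"
    using less_birkhoff_sup_iff[OF assms] birkhoff_inf_less_iff[OF assms] by blast
  then have "t < birkhoff_sum x k - birkhoff_sum x m"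
    by (simp add: \<delta>_def field_simps)
  then show "\<exists>k m. t < birkhoff_sum x k - birkhoff_sum x m" by blast
next
  assume "\<exists>k m. t < birkhoff_sum x k - birkhoff_sum x m"
  moreover have "birkhoff_sum x k \<le> birkhoff_sup x" "birkhoff_inf x \<le> birkhoff_sum x k" for k
    using less_birkhoff_sup_iff[OF assms, of "birkhoff_sup x"]
      birkhoff_inf_less_iff[OF assms, of "birkhoff_inf x"] by (auto simp: not_less[symmetric])
  ultimately show "t < birkhoff_sup x - birkhoff_inf x"
    by (meson diff_mono less_le_trans)
qed

lemma closedin_birkhoff_oscillation_le:
  "closedin (subtopology full_shift_top X) {x \<in> X. birkhoff_sup x - birkhoff_inf x \<le> t}"
proof -
  have "X - {x \<in> X. birkhoff_sup x - birkhoff_inf x \<le> t}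
      = X \<inter> (\<Union>k. \<Union>m. {x. t < birkhoff_sum x k - birkhoff_sum x m})"
  proof (intro set_eqI)
    fix x
    show "x \<in> X - {x \<in> X. birkhoff_sup x - birkhoff_inf x \<le> t}
        \<longleftrightarrow> x \<in> X \<inter> (\<Union>k. \<Union>m. {x. t < birkhoff_sum x k - birkhoff_sum x m})"
      using less_birkhoff_oscillation_iff[of x t] by (cases "x \<in> X") (auto simp: not_le)
  qed
  moreover have "openin (subtopology full_shift_top X)
      (X \<inter> (\<Union>k. \<Union>m. {x. t < birkhoff_sum x k - birkhoff_sum x m}))"
    by (intro openin_subtopology_Int2 openin_Union) (auto intro: openin_birkhoff_sum_diff)
  ultimately show ?thesis
    by (simp add: closedin_def)
qed

lemma birkhoff_oscillation_const:
  assumes "x \<in> X" and "y \<in> X"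
  shows "birkhoff_sup y - birkhoff_inf y = birkhoff_sup x - birkhoff_inf x"
proof -
  have "birkhoff_sup y - birkhoff_inf y \<le> birkhoff_sup x - birkhoff_inf x"
    if "x \<in> X" "y \<in> X" for x y
    using minimal_subshift_closed_invariant[OF minimal
        closedin_birkhoff_oscillation_le[of "birkhoff_sup x - birkhoff_inf x"], of x y]
      that birkhoff_sup_shift birkhoff_inf_shift by auto
  with assms show ?thesis
    by (meson antisym)
qed

lemma continuous_map_birkhoff_sup:
  "continuous_map (subtopology full_shift_top X) euclideanreal birkhoff_sup"
proof -
  obtain x0 where "x0 \<in> X"
    using minimal by (auto simp: minimal_subshift_def)
  define c where "c = birkhoff_sup x0 - birkhoff_inf x0"
  have sup_inf: "birkhoff_sup x = birkhoff_inf x + c" if "x \<in> X" for x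
    using birkhoff_oscillation_const[OF \<open>x0 \<in> X\<close> that] by (simp add: c_def)
  have "{x \<in> X. r < birkhoff_sup x} = X \<inter> (\<Union>k. {x. r < birkhoff_sum x k})" for r
    using less_birkhoff_sup_iff by auto
  moreover have "{x \<in> X. birkhoff_sup x < r} = X \<inter> (\<Union>k. {x. birkhoff_sum x k < r - c})" for r
  proof -
    have "birkhoff_sup x < r \<longleftrightarrow> (\<exists>k. birkhoff_sum x k < r - c)" if "x \<in> X" for x
      using birkhoff_inf_less_iff[OF that, of "r - c"] sup_inf[OF that] by (simp add: less_diff_eq)
    then show ?thesis by auto
  qed
  ultimately show ?thesis
    unfolding continuous_map_upper_lower_semicontinuous_lt
    by (auto intro!: openin_subtopology_Int2 openin_Union
        openin_birkhoff_sum_gt openin_birkhoff_sum_lt)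
qed

lemma exp_2pi_i_add_of_bool:
  "exp (2 * pi * \<i> * complex_of_real (t + of_bool b)) = exp (2 * pi * \<i> * complex_of_real t)"
  by (cases b) (simp_all add: distrib_left exp_add)

lemma eigenvalue: "additive_top_eigenvalue X \<mu>"
  unfolding additive_top_eigenvalue_def
proof (intro exI conjI ballI)
  let ?g = "\<lambda>x. exp (2 * pi * \<i> * complex_of_real (birkhoff_sup x))"
  have "continuous_map euclideanreal euclidean (\<lambda>t::real. exp (2 * pi * \<i> * complex_of_real t))"
    by (simp add: continuous_intros)
  from continuous_map_compose[OF continuous_map_birkhoff_sup this]
  show "continuous_map (subtopology full_shift_top X) euclidean ?g"
    by (simp add: o_def)
  show "\<exists>x\<in>X. ?g x \<noteq> 0"
    using minimal by (auto simp: minimal_subshift_def)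
  fix x assume "x \<in> X"
  have "?g (shift x) = exp (2 * pi * \<i> * complex_of_real (birkhoff_sup x + \<mu>))"
    using exp_2pi_i_add_of_bool[of "birkhoff_sup (shift x)" "occurs_at v x 0"]
    by (simp add: birkhoff_sup_shift[OF \<open>x \<in> X\<close>] deviation_def)
  also have "\<dots> = exp (2 * pi * \<i> * complex_of_real \<mu>) * ?g x"
    by (simp add: algebra_simps exp_add)
  finally show "?g (shift x) = exp (2 * pi * \<i> * complex_of_real \<mu>) * ?g x" .
qed

end

theorem theorem1p1:
  fixes X :: "(int \<Rightarrow> 'a::finite) set"
  assumes "minimal_subshift X" and "dendric X"
  shows "(balanced_on_letters X \<longleftrightarrow> balanced_on_factors X) \<and>
         (balanced_on_letters X \<longrightarrow>
            (\<forall>v\<in>lang X. \<exists>\<mu>. is_frequency X v \<mu> \<and> additive_top_eigenvalue X \<mu> \<and>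
                              bounded_remainder_set X v \<mu>))"
proof (intro conjI impI ballI)
  show "balanced_on_letters X \<longleftrightarrow> balanced_on_factors X"
    using balanced_on_factors_if_letters[OF assms(2)] balanced_on_letters_if_factors by blast
next
  fix v assume "balanced_on_letters X" and "v \<in> lang X"
  then have "balanced_on X v"
    using balanced_on_factors_if_letters[OF assms(2)] by (simp add: balanced_on_factors_def)
  moreover have "X \<noteq> {}"
    using assms(1) by (simp add: minimal_subshift_def)
  ultimately obtain \<mu> K
    where discrepancy: "\<And>w. w \<in> lang X \<Longrightarrow> \<bar>real (occ_count w v) - real (length w) * \<mu>\<bar> \<le> K"
    using balanced_on_linear_discrepancy by metis
  interpret minimal_linear_discrepancy X v \<mu> K
    by unfold_locales (use discrepancy assms(1) in auto)
  show "\<exists>\<mu>. is_frequency X v \<mu> \<and> additive_top_eigenvalue X \<mu> \<and> bounded_remainder_set X v \<mu>"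
    using frequency eigenvalue bounded_remainder[OF subshift] by blast
qed

end
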